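(* Let $A$ be a non-abelian subalgebra of the matrix metabelian Lie algebra $M_{I,\Lambda}$. Then $\mathrm{Fit}(A)=\{(f,u)\in A : f=0\}$.
   Context: For sets $I,\Lambda$ and a field $k$, let $R=k[x_\alpha:\alpha\in\Lambda]$ and $T$ the free $R$-module with basis $\{u_i:i\in I\}$. $M_{I,\Lambda}$ is the set of pairs $(f,u)$, $f\in R$, $u\in T$ (matrices $\begin{pmatrix} f&u\\0&0\end{pmatrix}$), with componentwise addition and scalar multiplication and product $(f,u)\circ(g,v)=(0,ug-vf)$; it is a metabelian Lie $k$-algebra. $\mathrm{Fit}(A)$ is the ideal of $A$ generated by all elements lying in nilpotent ideals of $A$. *)

theory Defs
  imports Main "HOL-Library.Poly_Mapping" "HOL-Library.Product_Plus"
begin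

text \<open>Polynomials k[x_alpha : alpha in Lambda] are finitely supported maps from
  monomials (finitely supported exponent vectors) to coefficients; the variables
  actually used are restricted to the set Lambda.\<close>

type_synonym ('lam, 'k) mpoly = "('lam \<Rightarrow>\<^sub>0 nat) \<Rightarrow>\<^sub>0 'k"

text \<open>Elements (f,u) of M_{I,Lambda}: f in R, u in T (free R-module on basis u_i, i in I,
  represented as finitely supported coefficient maps I -> R).\<close>

type_synonym ('i, 'lam, 'k) melem = "('lam, 'k) mpoly \<times> ('i \<Rightarrow>\<^sub>0 ('lam, 'k) mpoly)"

definition polys_in :: "'lam set \<Rightarrow> ('lam, 'k::zero) mpoly set" where
  "polys_in \<Lambda> = {p :: ('lam, 'k) mpoly. \<forall>m \<in> Poly_Mapping.keys p. Poly_Mapping.keys m \<subseteq> \<Lambda>}"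

definition module_in :: "'i set \<Rightarrow> 'lam set \<Rightarrow> ('i \<Rightarrow>\<^sub>0 ('lam, 'k::zero) mpoly) set" where
  "module_in I \<Lambda> = {u. Poly_Mapping.keys u \<subseteq> I \<and> (\<forall>i. Poly_Mapping.lookup u i \<in> polys_in \<Lambda>)}"

definition M_carrier :: "'i set \<Rightarrow> 'lam set \<Rightarrow> ('i, 'lam, 'k::zero) melem set" where
  "M_carrier I \<Lambda> = polys_in \<Lambda> \<times> module_in I \<Lambda>"

definition tsmul :: "('i \<Rightarrow>\<^sub>0 ('lam, 'k::comm_ring_1) mpoly) \<Rightarrow> ('lam, 'k) mpoly
    \<Rightarrow> ('i \<Rightarrow>\<^sub>0 ('lam, 'k) mpoly)" where
  "tsmul u g = Poly_Mapping.map (\<lambda>r. r * g) u"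

definition kscal :: "'k::comm_ring_1 \<Rightarrow> ('i, 'lam, 'k) melem \<Rightarrow> ('i, 'lam, 'k) melem" where
  "kscal c x = (Poly_Mapping.single 0 c * fst x,
                Poly_Mapping.map (\<lambda>r. Poly_Mapping.single 0 c * r) (snd x))"

definition mbr :: "('i, 'lam, 'k::comm_ring_1) melem \<Rightarrow> ('i, 'lam, 'k) melem \<Rightarrow> ('i, 'lam, 'k) melem" where
  "mbr x y = (0, tsmul (snd x) (fst y) - tsmul (snd y) (fst x))"

definition ksubspace :: "('i, 'lam, 'k::comm_ring_1) melem set \<Rightarrow> bool" where
  "ksubspace W \<longleftrightarrow> 0 \<in> W \<and> (\<forall>x\<in>W. \<forall>y\<in>W. x + y \<in> W) \<and> (\<forall>c. \<forall>x\<in>W. kscal c x \<in> W)"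

definition kspan :: "('i, 'lam, 'k::comm_ring_1) melem set \<Rightarrow> ('i, 'lam, 'k) melem set" where
  "kspan S = \<Inter>{W. ksubspace W \<and> S \<subseteq> W}"

definition subalgebra :: "'i set \<Rightarrow> 'lam set \<Rightarrow> ('i, 'lam, 'k::field) melem set \<Rightarrow> bool" where
  "subalgebra I \<Lambda> A \<longleftrightarrow> A \<subseteq> M_carrier I \<Lambda> \<and> ksubspace A \<and> (\<forall>x\<in>A. \<forall>y\<in>A. mbr x y \<in> A)"

definition non_abelian :: "('i, 'lam, 'k::comm_ring_1) melem set \<Rightarrow> bool" where
  "non_abelian A \<longleftrightarrow> (\<exists>x\<in>A. \<exists>y\<in>A. mbr x y \<noteq> 0)"

definition lie_ideal :: "('i, 'lam, 'k::comm_ring_1) melem set \<Rightarrow> ('i, 'lam, 'k) melem set \<Rightarrow> bool" where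
  "lie_ideal A J \<longleftrightarrow> J \<subseteq> A \<and> ksubspace J \<and> (\<forall>a\<in>A. \<forall>j\<in>J. mbr a j \<in> J)"

text \<open>Lower central series J^1 = J, J^(n+1) = [J, J^n] (index shifted by one).\<close>
fun lcs :: "('i, 'lam, 'k::comm_ring_1) melem set \<Rightarrow> nat \<Rightarrow> ('i, 'lam, 'k) melem set" where
  "lcs J 0 = J"
| "lcs J (Suc n) = kspan {mbr x y | x y. x \<in> J \<and> y \<in> lcs J n}"

definition lie_nilpotent :: "('i, 'lam, 'k::comm_ring_1) melem set \<Rightarrow> bool" where
  "lie_nilpotent J \<longleftrightarrow> (\<exists>n. lcs J n \<subseteq> {0})"

definition Fit :: "('i, 'lam, 'k::comm_ring_1) melem set \<Rightarrow> ('i, 'lam, 'k) melem set" where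
  "Fit A = \<Inter>{J. lie_ideal A J \<and> \<Union>{N. lie_ideal A N \<and> lie_nilpotent N} \<subseteq> J}"

end

theory Submission
  imports Defs
begin

text \<open>The elements (0, u) of A form an ideal on which the bracket vanishes, hence a nilpotent
  ideal. Conversely, let n = (f, u) with f \<noteq> 0 lie in a nilpotent ideal N. As A is
  non-abelian it contains a nonzero bracket (0, t), and [(0, t), n] = (0, t f) is a nonzero
  element of N of the form (0, v). Since R is a domain, ad n sends nonzero elements (0, v) to
  nonzero elements (0, - v f), so the lower central series of N never vanishes.\<close>

lemma lookup_mult_at_maximal_keys:
  fixes p q :: "'m::cancel_comm_monoid_add \<Rightarrow>\<^sub>0 'k::comm_semiring_0"
    and \<phi> :: "'m \<Rightarrow> 'l::{linorder,ordered_cancel_comm_monoid_add}"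
  assumes additive: "\<And>x y. \<phi> (x + y) = \<phi> x + \<phi> y"
    and inj: "inj_on \<phi> (Poly_Mapping.keys p)"
    and a: "a \<in> Poly_Mapping.keys p" "\<And>l. l \<in> Poly_Mapping.keys p \<Longrightarrow> \<phi> l \<le> \<phi> a"
    and b: "b \<in> Poly_Mapping.keys q" "\<And>r. r \<in> Poly_Mapping.keys q \<Longrightarrow> \<phi> r \<le> \<phi> b"
  shows "Poly_Mapping.lookup (p * q) (a + b) = Poly_Mapping.lookup p a * Poly_Mapping.lookup q b"
proof -
  have unique: "l = a \<and> r = b"
    if "l \<in> Poly_Mapping.keys p" "r \<in> Poly_Mapping.keys q" "a + b = l + r" for l r
  proof -
    have "\<phi> l + \<phi> r = \<phi> a + \<phi> b" using additive that(3) by metis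
    with a(2)[OF that(1)] b(2)[OF that(2)] have "\<phi> l = \<phi> a"
      by (metis add_less_le_mono order_less_le)
    with inj that(1) a(1) have "l = a" by (auto dest: inj_onD)
    with that(3) show ?thesis by simp
  qed
  have "Poly_Mapping.lookup p l * (\<Sum>r. Poly_Mapping.lookup q r when a + b = l + r)
      = (Poly_Mapping.lookup p a * Poly_Mapping.lookup q b when l = a)" for l
  proof (cases "l \<in> Poly_Mapping.keys p")
    case True
    have "(\<Sum>r. Poly_Mapping.lookup q r when a + b = l + r)
        = (\<Sum>r. Poly_Mapping.lookup q r when l = a \<and> r = b)"
      by (rule Sum_any.cong) (use unique True in \<open>auto simp: when_def in_keys_iff\<close>)
    then show ?thesis by (simp add: when_def)
  qed (auto simp: when_def in_keys_iff)
  then show ?thesis by (simp add: lookup_mult)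
qed

lemma mult_neq_zero_by_monomial_order:
  fixes p q :: "'m::cancel_comm_monoid_add \<Rightarrow>\<^sub>0 'k::{comm_semiring_0,semiring_no_zero_divisors}"
    and \<phi> :: "'m \<Rightarrow> 'l::{linorder,ordered_cancel_comm_monoid_add}"
  assumes additive: "\<And>x y. \<phi> (x + y) = \<phi> x + \<phi> y"
    and inj: "inj_on \<phi> (Poly_Mapping.keys p)"
    and "p \<noteq> 0" "q \<noteq> 0"
  shows "p * q \<noteq> 0"
proof -
  have "\<exists>a\<in>Poly_Mapping.keys f. \<forall>l\<in>Poly_Mapping.keys f. \<phi> l \<le> \<phi> a" if "f \<noteq> 0"
    for f :: "'m \<Rightarrow>\<^sub>0 'k"
  proof -
    have "Max (\<phi> ` Poly_Mapping.keys f) \<in> \<phi> ` Poly_Mapping.keys f"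
      using that by (intro Max_in) (auto simp: finite_keys)
    then show ?thesis by (metis Max_ge finite_imageI finite_keys imageE imageI)
  qed
  then obtain a b where "a \<in> Poly_Mapping.keys p" "\<forall>l\<in>Poly_Mapping.keys p. \<phi> l \<le> \<phi> a"
    and "b \<in> Poly_Mapping.keys q" "\<forall>r\<in>Poly_Mapping.keys q. \<phi> r \<le> \<phi> b"
    using assms(3,4) by meson
  then have "Poly_Mapping.lookup (p * q) (a + b) = Poly_Mapping.lookup p a * Poly_Mapping.lookup q b"
    by (intro lookup_mult_at_maximal_keys[OF additive inj]) auto
  also have "\<dots> \<noteq> 0"
    using \<open>a \<in> _\<close> \<open>b \<in> _\<close> by (simp add: in_keys_iff)
  finally show ?thesis by auto
qed

text \<open>Monomials in variables of an arbitrary type are not linearly ordered, but only finitely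
  many variables occur in p, so its monomials embed additively into the monomials in
  nat-indexed variables, which are.\<close>

lemma mpoly_mult_neq_zero:
  fixes p q :: "('lam, 'k::idom) mpoly"
  assumes "p \<noteq> 0" "q \<noteq> 0"
  shows "p * q \<noteq> 0"
proof -
  define V where "V = \<Union> (Poly_Mapping.keys ` Poly_Mapping.keys p)"
  have "finite V" unfolding V_def by (simp add: finite_keys)
  then obtain g :: "'lam \<Rightarrow> nat" where g: "inj_on g V"
    using finite_imp_inj_to_nat_seg by blast
  define \<phi> :: "('lam \<Rightarrow>\<^sub>0 nat) \<Rightarrow> (nat \<Rightarrow>\<^sub>0 nat)" where
    "\<phi> m = (\<Sum>v\<in>V. Poly_Mapping.single (g v) (Poly_Mapping.lookup m v))" for m
  have additive: "\<phi> (x + y) = \<phi> x + \<phi> y" for x y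
    by (simp add: \<phi>_def lookup_add single_add sum.distrib)
  have lookup_\<phi>: "Poly_Mapping.lookup (\<phi> m) (g v) = Poly_Mapping.lookup m v" if "v \<in> V" for m v
  proof -
    have "Poly_Mapping.lookup (\<phi> m) (g v) = (\<Sum>w\<in>V. Poly_Mapping.lookup m w when w = v)"
      using g that by (auto simp: \<phi>_def lookup_sum lookup_single when_def inj_on_eq_iff intro!: sum.cong)
    also have "\<dots> = Poly_Mapping.lookup m v"
      using \<open>finite V\<close> that by (simp add: when_def)
    finally show ?thesis .
  qed
  have "inj_on \<phi> (Poly_Mapping.keys p)"
  proof (rule inj_onI, rule poly_mapping_eqI)
    fix x y v assume x: "x \<in> Poly_Mapping.keys p" and y: "y \<in> Poly_Mapping.keys p"
      and "\<phi> x = \<phi> y"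
    then show "Poly_Mapping.lookup x v = Poly_Mapping.lookup y v"
      using lookup_\<phi>[of v x] lookup_\<phi>[of v y]
      by (cases "v \<in> V") (auto simp: V_def in_keys_iff)
  qed
  then show ?thesis
    using mult_neq_zero_by_monomial_order[OF additive] assms by blast
qed

lemma lookup_tsmul: "Poly_Mapping.lookup (tsmul u g) i = Poly_Mapping.lookup u i * g"
  by (simp add: tsmul_def map.rep_eq when_def)

lemma tsmul_zero_right [simp]: "tsmul u 0 = 0"
  by (rule poly_mapping_eqI) (simp add: lookup_tsmul)

lemma tsmul_neq_zero:
  fixes u :: "'i \<Rightarrow>\<^sub>0 ('lam, 'k::idom) mpoly"
  assumes "u \<noteq> 0" "g \<noteq> 0"
  shows "tsmul u g \<noteq> 0"
proof -
  obtain i where "Poly_Mapping.lookup u i \<noteq> 0"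
    using assms(1) by (metis lookup_zero poly_mapping_eqI)
  then have "Poly_Mapping.lookup (tsmul u g) i \<noteq> 0"
    using mpoly_mult_neq_zero assms(2) by (simp add: lookup_tsmul)
  then show ?thesis by auto
qed

lemma fst_mbr [simp]: "fst (mbr x y) = 0"
  by (simp add: mbr_def)

lemma snd_mbr_fst_zero:
  "fst y = 0 \<Longrightarrow> snd (mbr x y) = - tsmul (snd y) (fst x)"
  by (simp add: mbr_def)

lemma mbr_fst_zero: "fst x = 0 \<Longrightarrow> fst y = 0 \<Longrightarrow> mbr x y = 0"
  by (simp add: mbr_def zero_prod_def)

lemma mbr_mem_lcs_Suc: "x \<in> J \<Longrightarrow> y \<in> lcs J n \<Longrightarrow> mbr x y \<in> lcs J (Suc n)"
  unfolding lcs.simps kspan_def by blast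

lemma lie_nilpotent_if_fst_zero:
  fixes J :: "('i, 'lam, 'k::comm_ring_1) melem set"
  assumes "\<forall>x\<in>J. fst x = 0"
  shows "lie_nilpotent J"
proof -
  have "ksubspace {0 :: ('i, 'lam, 'k) melem}"
    by (simp add: ksubspace_def kscal_def zero_prod_def map_eq_zero_iff)
  moreover have "{mbr x y | x y. x \<in> J \<and> y \<in> lcs J 0} \<subseteq> {0}"
    using assms mbr_fst_zero by fastforce
  ultimately have "lcs J 1 \<subseteq> {0}"
    by (auto simp: kspan_def)
  then show ?thesis unfolding lie_nilpotent_def ..
qed

lemma not_lie_nilpotent_if_fst_neq_zero:
  fixes J :: "('i, 'lam, 'k::idom) melem set"
  assumes "n \<in> J" "fst n \<noteq> 0" and "s \<in> J" "fst s = 0" "snd s \<noteq> 0"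
  shows "\<not> lie_nilpotent J"
proof -
  have "\<exists>t\<in>lcs J k. fst t = 0 \<and> snd t \<noteq> 0" for k
  proof (induction k)
    case 0
    then show ?case using assms(3-5) by auto
  next
    case (Suc k)
    then obtain t where "t \<in> lcs J k" "fst t = 0" "snd t \<noteq> 0" by blast
    moreover have "snd (mbr n t) \<noteq> 0"
      using assms(2) \<open>fst t = 0\<close> \<open>snd t \<noteq> 0\<close> by (simp add: snd_mbr_fst_zero tsmul_neq_zero)
    ultimately show ?case
      using mbr_mem_lcs_Suc[OF assms(1)] by (metis fst_mbr)
  qed
  then have "\<not> lcs J k \<subseteq> {0}" for k
    by (fastforce simp: zero_prod_def)
  then show ?thesis
    unfolding lie_nilpotent_def by blast
qed

lemma Fit_eq_greatest_nilpotent_ideal: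
  assumes "lie_ideal A Z" "lie_nilpotent Z"
    and "\<And>N. lie_ideal A N \<Longrightarrow> lie_nilpotent N \<Longrightarrow> N \<subseteq> Z"
  shows "Fit A = Z"
proof -
  have "\<Union>{N. lie_ideal A N \<and> lie_nilpotent N} = Z"
    using assms by blast
  then show ?thesis
    using assms(1) unfolding Fit_def by blast
qed

lemma lie_ideal_fst_zero:
  fixes A :: "('i, 'lam, 'k::field) melem set"
  assumes "subalgebra I \<Lambda> A"
  shows "lie_ideal A {x \<in> A. fst x = 0}"
proof -
  have "ksubspace A" "\<forall>x\<in>A. \<forall>y\<in>A. mbr x y \<in> A"
    using assms unfolding subalgebra_def by auto
  moreover have "fst (kscal c x) = 0" if "fst x = 0" for c and x :: "('i, 'lam, 'k) melem"
    using that by (simp add: kscal_def)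
  ultimately show ?thesis
    unfolding lie_ideal_def ksubspace_def by auto
qed

lemma nilpotent_ideal_fst_zero:
  fixes A :: "('i, 'lam, 'k::field) melem set"
  assumes "subalgebra I \<Lambda> A" "non_abelian A"
    and "lie_ideal A N" "lie_nilpotent N" "n \<in> N"
  shows "fst n = 0"
proof (rule ccontr)
  assume fst_n: "fst n \<noteq> 0"
  obtain x y where "x \<in> A" "y \<in> A" and xy: "mbr x y \<noteq> 0"
    using assms(2) unfolding non_abelian_def by blast
  then have "mbr x y \<in> A"
    using assms(1) unfolding subalgebra_def by blast
  then have "mbr (mbr x y) n \<in> N"
    using assms(3,5) unfolding lie_ideal_def by blast
  moreover have "snd (mbr x y) \<noteq> 0"
    using xy by (metis fst_mbr prod.collapse zero_prod_def)
  with fst_n have "snd (mbr (mbr x y) n) \<noteq> 0"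
    by (simp add: mbr_def tsmul_neq_zero)
  ultimately have "\<not> lie_nilpotent N"
    using not_lie_nilpotent_if_fst_neq_zero[OF assms(5) fst_n] by simp
  with assms(4) show False by contradiction
qed

theorem lemma3p1p1:
  fixes I :: "'i set" and \<Lambda> :: "'lam set" and A :: "('i, 'lam, 'k::field) melem set"
  assumes "subalgebra I \<Lambda> A" and "non_abelian A"
  shows "Fit A = {x \<in> A. fst x = 0}"
proof (rule Fit_eq_greatest_nilpotent_ideal)
  show "lie_ideal A {x \<in> A. fst x = 0}"
    using assms(1) by (rule lie_ideal_fst_zero)
  show "lie_nilpotent {x \<in> A. fst x = 0}"
    by (rule lie_nilpotent_if_fst_zero) simp
  fix N assume "lie_ideal A N" "lie_nilpotent N"
  then show "N \<subseteq> {x \<in> A. fst x = 0}"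
    using nilpotent_ideal_fst_zero[OF assms] unfolding lie_ideal_def by blast
qed

end
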